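(* Let $G=(V,E)$ be a mobility graph and fix parameters $L\ge1$, $\tau\ge1$. Define $f:2^V\to\mathbb{R}_{\ge0}$ by $f(S)=\sum_{v\in V}\sqrt{\ell(v,\tau,S)}$. Then $f$ is monotone, i.e. $f(S\cup\{v\})\ge f(S)$ for all $S\subseteq V$, $v\in V$, and submodular, i.e. $f(S\cup\{v\})-f(S)\ge f(T\cup\{v\})-f(T)$ for all $S\subseteq T\subseteq V$ and $v\in V\setminus T$.
   Context: A mobility graph is a directed graph $G=(V,E)$ (self-loops allowed) with a probability $p_e\in[0,1]$ on each edge $e$, such that for each $u\in V$, $\sum_{v\in\Gamma^{OUT}(u)} p_{(u,v)}=1$, where $\Gamma^{OUT}(u)=\{w:(u,w)\in E\}$ and $\Gamma^{IN}(v)=\{w:(w,v)\in E\}$. For a seed set $S\subseteq V$ and integer $L\ge1$, the loads are defined by $\ell(v,0,S)=L$ if $v\in S$, $\ell(v,0,S)=0$ otherwise, and for $t\ge1$, $\ell(v,t,S)=\sum_{u\in\Gamma^{IN}(v)} p_{(u,v)}\,\ell(u,t-1,S)$ for all $v\in V$. *)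

theory Defs
  imports "HOL-Analysis.Analysis"
begin

definition out_nbrs :: "('a \<times> 'a) set \<Rightarrow> 'a \<Rightarrow> 'a set" where
  "out_nbrs E u = {w. (u, w) \<in> E}"

definition in_nbrs :: "('a \<times> 'a) set \<Rightarrow> 'a \<Rightarrow> 'a set" where
  "in_nbrs E v = {w. (w, v) \<in> E}"

definition mobility_graph :: "'a set \<Rightarrow> ('a \<times> 'a) set \<Rightarrow> ('a \<times> 'a \<Rightarrow> real) \<Rightarrow> bool" where
  "mobility_graph V E p \<longleftrightarrow>
     finite V \<and> E \<subseteq> V \<times> V \<and>
     (\<forall>e\<in>E. 0 \<le> p e \<and> p e \<le> 1) \<and>
     (\<forall>u\<in>V. (\<Sum>v\<in>out_nbrs E u. p (u, v)) = 1)"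

fun load :: "('a \<times> 'a) set \<Rightarrow> ('a \<times> 'a \<Rightarrow> real) \<Rightarrow> nat \<Rightarrow> 'a \<Rightarrow> nat \<Rightarrow> 'a set \<Rightarrow> real" where
  "load E p L v 0 S = (if v \<in> S then real L else 0)"
| "load E p L v (Suc t) S = (\<Sum>u\<in>in_nbrs E v. p (u, v) * load E p L u t S)"

definition f_obj :: "'a set \<Rightarrow> ('a \<times> 'a) set \<Rightarrow> ('a \<times> 'a \<Rightarrow> real) \<Rightarrow> nat \<Rightarrow> nat \<Rightarrow> 'a set \<Rightarrow> real" where
  "f_obj V E p L \<tau> S = (\<Sum>v\<in>V. sqrt (load E p L v \<tau> S))"

end

theory Submission
  imports Defs
begin

text \<open>For fixed v and t the load is additive in the seed set and, since the edge probabilities are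
  nonnegative, monotone in it. So f is a sum of square roots of nonnegative modular functions,
  and the concavity of the square root (diminishing increments) gives submodularity.\<close>

lemma load_Un_disjoint:
  "A \<inter> B = {} \<Longrightarrow> load E p L v t (A \<union> B) = load E p L v t A + load E p L v t B"
  by (induction t arbitrary: v) (auto simp: sum.distrib distrib_left)

lemma load_nonneg:
  assumes "\<forall>e\<in>E. 0 \<le> p e"
  shows "0 \<le> load E p L v t S"
  using assms by (induction t arbitrary: v) (auto simp: in_nbrs_def intro!: sum_nonneg)

lemma load_mono:
  assumes "\<forall>e\<in>E. 0 \<le> p e" and "S \<subseteq> T"
  shows "load E p L v t S \<le> load E p L v t T"
  using assms
  by (induction t arbitrary: v) (auto simp: in_nbrs_def intro!: sum_mono mult_left_mono)

lemma real_sqrt_add_diff_antimono: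
  fixes a b c :: real
  assumes "0 \<le> a" and "a \<le> b" and "0 \<le> c"
  shows "sqrt (b + c) - sqrt b \<le> sqrt (a + c) - sqrt a"
proof -
  have "(b + c) * a \<le> (a + c) * b"
    using assms by (simp add: mult_right_mono algebra_simps)
  then have cross: "sqrt (b + c) * sqrt a \<le> sqrt (a + c) * sqrt b"
    by (simp flip: real_sqrt_mult)
  have "(sqrt (b + c) + sqrt a)\<^sup>2 = b + c + a + 2 * (sqrt (b + c) * sqrt a)"
    using assms by (simp add: power2_sum)
  also have "\<dots> \<le> a + c + b + 2 * (sqrt (a + c) * sqrt b)"
    using cross by simp
  also have "\<dots> = (sqrt (a + c) + sqrt b)\<^sup>2"
    using assms by (simp add: power2_sum)
  finally have "sqrt (b + c) + sqrt a \<le> sqrt (a + c) + sqrt b"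
    by (rule power2_le_imp_le) (use assms in simp)
  then show ?thesis
    by simp
qed

lemma f_obj_mono:
  assumes "\<forall>e\<in>E. 0 \<le> p e" and "S \<subseteq> T"
  shows "f_obj V E p L \<tau> S \<le> f_obj V E p L \<tau> T"
  unfolding f_obj_def using assms by (auto intro!: sum_mono load_mono)

lemma f_obj_submodular:
  assumes "\<forall>e\<in>E. 0 \<le> p e" and "S \<subseteq> T" and "x \<notin> T"
  shows "f_obj V E p L \<tau> (T \<union> {x}) - f_obj V E p L \<tau> T
       \<le> f_obj V E p L \<tau> (S \<union> {x}) - f_obj V E p L \<tau> S"
proof -
  have "sqrt (load E p L v \<tau> (T \<union> {x})) - sqrt (load E p L v \<tau> T)
      \<le> sqrt (load E p L v \<tau> (S \<union> {x})) - sqrt (load E p L v \<tau> S)" for v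
  proof -
    have "load E p L v \<tau> (S \<union> {x}) = load E p L v \<tau> S + load E p L v \<tau> {x}"
      and "load E p L v \<tau> (T \<union> {x}) = load E p L v \<tau> T + load E p L v \<tau> {x}"
      using assms by (blast intro: load_Un_disjoint)+
    then show ?thesis
      using real_sqrt_add_diff_antimono[OF load_nonneg[of E p L v \<tau> S]
          load_mono[of E p S T L v \<tau>] load_nonneg[of E p L v \<tau> "{x}"]] assms
      by simp
  qed
  then show ?thesis
    unfolding f_obj_def by (simp add: sum_subtractf[symmetric] sum_mono)
qed

theorem mainTheorem5:
  fixes V :: "'a set" and E :: "('a \<times> 'a) set" and p :: "'a \<times> 'a \<Rightarrow> real"
    and L \<tau> :: nat
  assumes "mobility_graph V E p" and "L \<ge> 1" and "\<tau> \<ge> 1"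
  shows "(\<forall>S v. S \<subseteq> V \<and> v \<in> V \<longrightarrow>
            f_obj V E p L \<tau> (S \<union> {v}) \<ge> f_obj V E p L \<tau> S)
       \<and> (\<forall>S T v. S \<subseteq> T \<and> T \<subseteq> V \<and> v \<in> V - T \<longrightarrow>
            f_obj V E p L \<tau> (S \<union> {v}) - f_obj V E p L \<tau> S
              \<ge> f_obj V E p L \<tau> (T \<union> {v}) - f_obj V E p L \<tau> T)"
proof -
  have "\<forall>e\<in>E. 0 \<le> p e"
    using assms(1) unfolding mobility_graph_def by auto
  then show ?thesis
    using f_obj_mono f_obj_submodular by (metis Diff_iff Un_upper1)
qed

end
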